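(* Let $T$ be an Aronszajn tree and let $A\subseteq T$ be an uncountable antichain. Then there is an infinite chain $C\subseteq T$ such that every element of $C$ is the meet $a\wedge b$ of two distinct elements $a,b\in A$.
   Context: Trees are taken to be subsets $T\subseteq{}^{<\omega_1}\omega$ (functions from countable ordinals to $\omega$) that are closed under initial segments, ordered by $s<_T t$ iff $t$ properly extends $s$. Such a $T$ is an Aronszajn tree if it is uncountable, each level (set of elements with a given domain) is countable, and it has no uncountable chain (branch). For $s,t\in T$ the meet $s\wedge t$ is the longest common initial segment of $s$ and $t$ (an element of $T$). An antichain is a set of pairwise $<_T$-incomparable elements; a chain is a set of pairwise comparable elements. *)

theory Defs
  imports Main "HOL-Library.Countable_Set"
begin

text \<open>omega_1 is modelled by a well-ordered type which is uncountable but all of whose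
  proper initial segments are countable (any such type is order-isomorphic to omega_1).
  An element alpha of the type stands for the countable ordinal {beta. beta < alpha}.\<close>
definition omega1_like :: "('a::wellorder) itself \<Rightarrow> bool" where
  "omega1_like _ \<longleftrightarrow> uncountable (UNIV :: 'a set) \<and> (\<forall>x::'a. countable {y. y < x})"

text \<open>Elements of ${}^{<\omega_1}\omega$: partial functions whose domain is a countable ordinal.\<close>
definition seq :: "('a::wellorder \<Rightarrow> nat option) \<Rightarrow> bool" where
  "seq s \<longleftrightarrow> (\<exists>\<alpha>. dom s = {\<beta>. \<beta> < \<alpha>})"

definition tless :: "('a \<Rightarrow> nat option) \<Rightarrow> ('a \<Rightarrow> nat option) \<Rightarrow> bool" where
  "tless s t \<longleftrightarrow> s \<subseteq>\<^sub>m t \<and> s \<noteq> t"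

definition is_tree :: "('a::wellorder \<Rightarrow> nat option) set \<Rightarrow> bool" where
  "is_tree T \<longleftrightarrow> (\<forall>t\<in>T. seq t) \<and> (\<forall>t\<in>T. \<forall>\<alpha>. t |` {\<beta>. \<beta> < \<alpha>} \<in> T)"

definition level :: "('a::wellorder \<Rightarrow> nat option) set \<Rightarrow> 'a \<Rightarrow> ('a \<Rightarrow> nat option) set" where
  "level T \<alpha> = {t \<in> T. dom t = {\<beta>. \<beta> < \<alpha>}}"

definition is_chain :: "('a \<Rightarrow> nat option) set \<Rightarrow> bool" where
  "is_chain C \<longleftrightarrow> (\<forall>s\<in>C. \<forall>t\<in>C. s = t \<or> tless s t \<or> tless t s)"

definition is_antichain :: "('a \<Rightarrow> nat option) set \<Rightarrow> bool" where
  "is_antichain A \<longleftrightarrow> (\<forall>s\<in>A. \<forall>t\<in>A. \<not> tless s t)"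

definition aronszajn :: "('a::wellorder \<Rightarrow> nat option) set \<Rightarrow> bool" where
  "aronszajn T \<longleftrightarrow> is_tree T \<and> uncountable T \<and> (\<forall>\<alpha>. countable (level T \<alpha>))
     \<and> (\<forall>C\<subseteq>T. is_chain C \<longrightarrow> countable C)"

definition meet :: "('a::wellorder \<Rightarrow> nat option) \<Rightarrow> ('a \<Rightarrow> nat option) \<Rightarrow> ('a \<Rightarrow> nat option)" where
  "meet s t = s |` {\<beta>. \<forall>\<delta>\<le>\<beta>. s \<delta> = t \<delta>}"

end

theory Submission
  imports Defs
begin

text \<open>Call a node heavy if uncountably many elements of A extend it; the root is heavy.
  The heavy nodes above a heavy node s do not form a chain: such a chain is countable, so
  its heights are bounded by some alpha < omega_1, whereas all but countably many elements of A
  above s reach level alpha, and as that level is countable one of its nodes is a heavy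
  extension of s. Splitting twice gives s < t1 below incomparable heavy nodes u1, u2; for a1
  above u1 and a2 above u2 the meet of a1 and a2 extends t1 and lies below u1, so it is heavy
  and strictly above s. Iterating yields the chain.\<close>

lemma tless_trans: "tless r s \<Longrightarrow> tless s t \<Longrightarrow> tless r t"
  unfolding tless_def using map_le_trans map_le_antisym by blast

lemma tless_irrefl: "\<not> tless t t"
  unfolding tless_def by simp

lemma infinite_chain_of_no_maximal:
  assumes "S \<noteq> {}" and step: "\<forall>s\<in>S. \<exists>t\<in>S. tless s t"
  shows "\<exists>C\<subseteq>S. infinite C \<and> is_chain C"
proof -
  obtain f where f: "\<And>n. f n \<in> S \<and> tless (f n) (f (Suc n))"
    using dependent_nat_choice[where P = "\<lambda>_ s. s \<in> S" and Q = "\<lambda>_ s t. tless s t"]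
      assms by blast
  have increasing: "tless (f i) (f j)" if "i < j" for i j
    using that by (induction rule: less_Suc_induct) (use f tless_trans in blast)+
  have "inj f"
    by (rule linorder_injI) (metis increasing tless_irrefl)
  moreover have "is_chain (range f)"
    unfolding is_chain_def by (metis increasing linorder_neqE_nat rangeE)
  ultimately show ?thesis
    using f range_inj_infinite by blast
qed

definition height :: "('a::wellorder \<Rightarrow> nat option) \<Rightarrow> 'a" where
  "height t = (LEAST \<alpha>. \<alpha> \<notin> dom t)"

lemma dom_eq_height:
  assumes "seq t"
  shows "dom t = {\<beta>. \<beta> < height t}"
proof -
  obtain \<gamma> where \<gamma>: "dom t = {\<beta>. \<beta> < \<gamma>}"
    using assms unfolding seq_def by blast
  have "height t = \<gamma>"
    unfolding height_def by (rule Least_equality) (auto simp: \<gamma> not_less)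
  with \<gamma> show ?thesis by simp
qed

lemma map_le_restrict_map: "s \<subseteq>\<^sub>m a \<Longrightarrow> dom s \<subseteq> X \<Longrightarrow> s \<subseteq>\<^sub>m a |` X"
  unfolding map_le_def by auto

lemma restrict_map_map_le: "a |` X \<subseteq>\<^sub>m a"
  unfolding map_le_def by auto

lemma map_le_of_dom_subset: "u \<subseteq>\<^sub>m a \<Longrightarrow> v \<subseteq>\<^sub>m a \<Longrightarrow> dom u \<subseteq> dom v \<Longrightarrow> u \<subseteq>\<^sub>m v"
  unfolding map_le_def by (metis domIff subsetD)

lemma seq_map_le_comparable:
  assumes "seq u" "seq v" "u \<subseteq>\<^sub>m a" "v \<subseteq>\<^sub>m a"
  shows "u \<subseteq>\<^sub>m v \<or> v \<subseteq>\<^sub>m u"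
proof (cases "height u \<le> height v")
  case True
  then have "dom u \<subseteq> dom v" using assms(1,2) by (auto simp: dom_eq_height)
  then show ?thesis using assms(3,4) map_le_of_dom_subset by blast
next
  case False
  then have "dom v \<subseteq> dom u" using assms(1,2) by (auto simp: dom_eq_height)
  then show ?thesis using assms(3,4) map_le_of_dom_subset by blast
qed

lemma meet_map_le_left: "meet a b \<subseteq>\<^sub>m a"
  unfolding meet_def by (rule restrict_map_map_le)

lemma meet_map_le_right: "meet a b \<subseteq>\<^sub>m b"
  unfolding meet_def map_le_def by auto

lemma map_le_meet:
  assumes "seq t" "t \<subseteq>\<^sub>m a" "t \<subseteq>\<^sub>m b"
  shows "t \<subseteq>\<^sub>m meet a b"
proof -
  have "dom t \<subseteq> {\<beta>. \<forall>\<delta>\<le>\<beta>. a \<delta> = b \<delta>}"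
  proof (intro subsetI CollectI allI impI)
    fix \<beta> \<delta> assume "\<beta> \<in> dom t" "\<delta> \<le> \<beta>"
    then have "\<delta> \<in> dom t" using dom_eq_height[OF assms(1)] by auto
    then show "a \<delta> = b \<delta>" using assms(2,3) unfolding map_le_def by metis
  qed
  then show ?thesis unfolding meet_def using map_le_restrict_map[OF assms(2)] by blast
qed

lemma meet_map_le_of_incomparable:
  assumes "seq (meet a b)" "seq u" "seq v" "u \<subseteq>\<^sub>m a" "v \<subseteq>\<^sub>m b"
    and "\<not> u \<subseteq>\<^sub>m v" "\<not> v \<subseteq>\<^sub>m u"
  shows "meet a b \<subseteq>\<^sub>m u"
proof (rule ccontr)
  assume "\<not> meet a b \<subseteq>\<^sub>m u"
  then have "u \<subseteq>\<^sub>m meet a b"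
    using seq_map_le_comparable[OF assms(1,2) meet_map_le_left assms(4)] by blast
  then have "u \<subseteq>\<^sub>m b" using meet_map_le_right map_le_trans by blast
  then show False using seq_map_le_comparable[OF assms(2,3) _ assms(5)] assms(6,7) by blast
qed

lemma meet_eq_restrict_map:
  assumes "a \<noteq> b"
  shows "meet a b = a |` {\<beta>. \<beta> < (LEAST \<delta>. a \<delta> \<noteq> b \<delta>)}"
proof -
  let ?\<gamma> = "LEAST \<delta>. a \<delta> \<noteq> b \<delta>"
  have "\<exists>\<delta>. a \<delta> \<noteq> b \<delta>" using assms by auto
  then have first: "a ?\<gamma> \<noteq> b ?\<gamma>" by (rule LeastI_ex)
  have "{\<beta>. \<forall>\<delta>\<le>\<beta>. a \<delta> = b \<delta>} = {\<beta>. \<beta> < ?\<gamma>}"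
  proof (intro set_eqI iffI CollectI allI impI)
    fix \<beta> assume "\<beta> \<in> {\<beta>. \<forall>\<delta>\<le>\<beta>. a \<delta> = b \<delta>}"
    then have "\<not> ?\<gamma> \<le> \<beta>" using first by blast
    then show "\<beta> < ?\<gamma>" by simp
  next
    fix \<beta> \<delta> assume "\<beta> \<in> {\<beta>. \<beta> < ?\<gamma>}" "\<delta> \<le> \<beta>"
    then have "\<delta> < ?\<gamma>" by simp
    then show "a \<delta> = b \<delta>" using not_less_Least[of \<delta> "\<lambda>\<delta>. a \<delta> \<noteq> b \<delta>"] by blast
  qed
  then show ?thesis unfolding meet_def by simp
qed

lemma meet_in_tree: "is_tree T \<Longrightarrow> a \<in> T \<Longrightarrow> a \<noteq> b \<Longrightarrow> meet a b \<in> T"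
  unfolding is_tree_def by (simp add: meet_eq_restrict_map)

lemma empty_in_tree:
  fixes t :: "'a::wellorder \<Rightarrow> nat option"
  assumes "is_tree T" "t \<in> T"
  shows "Map.empty \<in> T"
proof -
  have "{\<beta>::'a. \<beta> < (LEAST \<beta>. True)} = {}" using not_less_Least by blast
  moreover have "t |` {\<beta>. \<beta> < (LEAST \<beta>::'a. True)} \<in> T"
    using assms unfolding is_tree_def by blast
  ultimately show ?thesis by simp
qed

lemma restrict_in_level:
  assumes "is_tree T" "t \<in> T" "\<alpha> \<le> height t"
  shows "t |` {\<beta>. \<beta> < \<alpha>} \<in> level T \<alpha>"
proof -
  have "dom t = {\<beta>. \<beta> < height t}"
    using assms(1,2) unfolding is_tree_def by (simp add: dom_eq_height)
  then show ?thesis using assms unfolding level_def is_tree_def by auto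
qed

lemma omega1_like_countable_le:
  assumes "omega1_like TYPE('a::wellorder)"
  shows "countable {y::'a. y \<le> x}"
proof -
  have "{y. y \<le> x} = insert x {y. y < x}" by auto
  then show ?thesis using assms unfolding omega1_like_def by simp
qed

lemma omega1_like_bounded:
  assumes "omega1_like TYPE('a::wellorder)" "countable (X :: 'a set)"
  shows "\<exists>\<alpha>. \<forall>x\<in>X. x < \<alpha>"
proof -
  have "countable (\<Union>x\<in>X. {y. y \<le> x})"
    using assms omega1_like_countable_le by blast
  moreover have "uncountable (UNIV :: 'a set)"
    using assms(1) unfolding omega1_like_def by blast
  ultimately have "(\<Union>x\<in>X. {y. y \<le> x}) \<noteq> UNIV" by auto
  then obtain \<alpha> where "\<alpha> \<notin> (\<Union>x\<in>X. {y. y \<le> x})" by blast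
  then show ?thesis by (auto simp: not_le)
qed

lemma countable_nodes_of_height_le:
  assumes "omega1_like TYPE('a::wellorder)" "aronszajn (T :: ('a \<Rightarrow> nat option) set)"
  shows "countable {t\<in>T. height t \<le> \<alpha>}"
proof -
  have "t \<in> level T (height t)" if "t \<in> T" for t
    using assms(2) that unfolding aronszajn_def is_tree_def level_def by (simp add: dom_eq_height)
  then have "{t\<in>T. height t \<le> \<alpha>} \<subseteq> (\<Union>\<gamma>\<in>{\<gamma>. \<gamma> \<le> \<alpha>}. level T \<gamma>)" by blast
  moreover have "countable (level T \<gamma>)" for \<gamma>
    using assms(2) unfolding aronszajn_def by blast
  then have "countable (\<Union>\<gamma>\<in>{\<gamma>. \<gamma> \<le> \<alpha>}. level T \<gamma>)"
    using omega1_like_countable_le[OF assms(1)] by blast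
  ultimately show ?thesis by (rule countable_subset)
qed

lemma uncountable_fibre:
  assumes "uncountable B" "countable (f ` B)"
  shows "\<exists>y\<in>f ` B. uncountable {x\<in>B. f x = y}"
proof (rule ccontr)
  assume "\<not> ?thesis"
  then have "countable (\<Union>y\<in>f ` B. {x\<in>B. f x = y})" using assms(2) by blast
  moreover have "B = (\<Union>y\<in>f ` B. {x\<in>B. f x = y})" by blast
  ultimately show False using assms(1) by simp
qed

definition heavy :: "('a::wellorder \<Rightarrow> nat option) set \<Rightarrow> ('a \<Rightarrow> nat option) set
    \<Rightarrow> ('a \<Rightarrow> nat option) set" where
  "heavy T A = {t\<in>T. uncountable {a\<in>A. t \<subseteq>\<^sub>m a}}"

lemma heavy_downward:
  assumes "s \<in> T" "s \<subseteq>\<^sub>m t" "t \<in> heavy T A"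
  shows "s \<in> heavy T A"
proof -
  have "{a\<in>A. t \<subseteq>\<^sub>m a} \<subseteq> {a\<in>A. s \<subseteq>\<^sub>m a}" using assms(2) map_le_trans by blast
  then show ?thesis using assms(1,3) countable_subset unfolding heavy_def by blast
qed

lemma heavy_nonempty:
  assumes "t \<in> heavy T A"
  shows "\<exists>a\<in>A. t \<subseteq>\<^sub>m a"
proof -
  have "uncountable {a\<in>A. t \<subseteq>\<^sub>m a}" using assms unfolding heavy_def by blast
  then have "{a\<in>A. t \<subseteq>\<^sub>m a} \<noteq> {}" by (metis countable_empty)
  then show ?thesis by blast
qed

lemma heavy_extension_at_level:
  fixes T A :: "('a::wellorder \<Rightarrow> nat option) set"
  assumes om: "omega1_like TYPE('a)" and ar: "aronszajn T" and "A \<subseteq> T"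
    and s: "s \<in> heavy T A" and "height s \<le> \<alpha>"
  shows "\<exists>t\<in>heavy T A. s \<subseteq>\<^sub>m t \<and> dom t = {\<beta>. \<beta> < \<alpha>}"
proof -
  have tree: "is_tree T" and "countable (level T \<alpha>)"
    using ar unfolding aronszajn_def by blast+
  have seqs: "seq t" if "t \<in> T" for t using tree that unfolding is_tree_def by blast
  define B where "B = {a\<in>A. s \<subseteq>\<^sub>m a} - {t\<in>T. height t \<le> \<alpha>}"
  define trunc where "trunc a = a |` {\<beta>. \<beta> < \<alpha>}" for a :: "'a \<Rightarrow> nat option"
  have "uncountable B"
    unfolding B_def using s countable_nodes_of_height_le[OF om ar] uncountable_minus_countable
    unfolding heavy_def by blast
  have "trunc a \<in> level T \<alpha>" if "a \<in> B" for a
  proof -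
    have "a \<in> T" "\<alpha> \<le> height a" using that \<open>A \<subseteq> T\<close> unfolding B_def by auto
    then show ?thesis unfolding trunc_def by (rule restrict_in_level[OF tree])
  qed
  then have trunc_B: "trunc ` B \<subseteq> level T \<alpha>" by blast
  then have "countable (trunc ` B)"
    using \<open>countable (level T \<alpha>)\<close> by (rule countable_subset)
  from uncountable_fibre[OF \<open>uncountable B\<close> this]
  obtain t where "t \<in> trunc ` B" and fibre: "uncountable {a\<in>B. trunc a = t}" ..
  then have t: "t \<in> T" "dom t = {\<beta>. \<beta> < \<alpha>}" using trunc_B unfolding level_def by auto
  have "{a\<in>B. trunc a = t} \<subseteq> {a\<in>A. t \<subseteq>\<^sub>m a}"
    unfolding B_def trunc_def using restrict_map_map_le by blast
  then have "t \<in> heavy T A"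
    unfolding heavy_def using t(1) fibre countable_subset by blast
  have "{a\<in>B. trunc a = t} \<noteq> {}" using fibre by (metis countable_empty)
  then obtain a where "a \<in> B" "trunc a = t" by blast
  then have "s \<in> T" "s \<subseteq>\<^sub>m a" using s unfolding B_def heavy_def by auto
  moreover have "dom s \<subseteq> {\<beta>. \<beta> < \<alpha>}"
    using dom_eq_height[OF seqs[OF \<open>s \<in> T\<close>]] \<open>height s \<le> \<alpha>\<close> by auto
  ultimately have "s \<subseteq>\<^sub>m t"
    using map_le_restrict_map \<open>trunc a = t\<close> unfolding trunc_def by blast
  then show ?thesis using \<open>t \<in> heavy T A\<close> t(2) by blast
qed

lemma heavy_splits:
  fixes T A :: "('a::wellorder \<Rightarrow> nat option) set"
  assumes om: "omega1_like TYPE('a)" and ar: "aronszajn T" and "A \<subseteq> T"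
    and s: "s \<in> heavy T A"
  shows "\<exists>t1\<in>heavy T A. \<exists>t2\<in>heavy T A.
           s \<subseteq>\<^sub>m t1 \<and> s \<subseteq>\<^sub>m t2 \<and> \<not> t1 \<subseteq>\<^sub>m t2 \<and> \<not> t2 \<subseteq>\<^sub>m t1"
proof (rule ccontr)
  assume no_split: "\<not> ?thesis"
  define U where "U = {t\<in>heavy T A. s \<subseteq>\<^sub>m t}"
  have seqs: "seq t" if "t \<in> U" for t
    using that ar unfolding U_def heavy_def aronszajn_def is_tree_def by blast
  have "is_chain U"
    using no_split unfolding is_chain_def tless_def U_def by blast
  moreover have "U \<subseteq> T" unfolding U_def heavy_def by blast
  ultimately have "countable U" using ar unfolding aronszajn_def by blast
  then obtain \<alpha> where bound: "\<forall>t\<in>U. height t < \<alpha>"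
    using omega1_like_bounded[OF om, of "height ` U"] by blast
  have "s \<in> U" unfolding U_def using s by simp
  then obtain t where "t \<in> heavy T A" "s \<subseteq>\<^sub>m t" and t: "dom t = {\<beta>. \<beta> < \<alpha>}"
    using heavy_extension_at_level[OF om ar \<open>A \<subseteq> T\<close> s] bound less_imp_le by blast
  then have "t \<in> U" unfolding U_def by blast
  then have "height t \<in> dom t" using bound t by simp
  then show False using dom_eq_height[OF seqs[OF \<open>t \<in> U\<close>]] by simp
qed

lemma heavy_meet_above:
  fixes T A :: "('a::wellorder \<Rightarrow> nat option) set"
  assumes om: "omega1_like TYPE('a)" and ar: "aronszajn T" and AT: "A \<subseteq> T"
    and s: "s \<in> heavy T A"
  shows "\<exists>m\<in>heavy T A. tless s m \<and> (\<exists>a\<in>A. \<exists>b\<in>A. a \<noteq> b \<and> m = meet a b)"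
proof -
  have tree: "is_tree T" using ar unfolding aronszajn_def by blast
  have seqs: "seq t" if "t \<in> T" for t using tree that unfolding is_tree_def by blast
  have heavy_seq: "seq t" if "t \<in> heavy T A" for t using that seqs unfolding heavy_def by blast
  obtain t1 t2 where t1: "t1 \<in> heavy T A" "s \<subseteq>\<^sub>m t1" "s \<subseteq>\<^sub>m t2" "\<not> t1 \<subseteq>\<^sub>m t2"
    using heavy_splits[OF om ar AT s] by blast
  obtain u1 u2 where u: "u1 \<in> heavy T A" "u2 \<in> heavy T A" "t1 \<subseteq>\<^sub>m u1" "t1 \<subseteq>\<^sub>m u2"
      "\<not> u1 \<subseteq>\<^sub>m u2" "\<not> u2 \<subseteq>\<^sub>m u1"
    using heavy_splits[OF om ar AT t1(1)] by blast
  obtain a1 a2 where a: "a1 \<in> A" "u1 \<subseteq>\<^sub>m a1" "a2 \<in> A" "u2 \<subseteq>\<^sub>m a2"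
    using heavy_nonempty u(1,2) by blast
  have seq_u: "seq u1" "seq u2" using heavy_seq u(1,2) by blast+
  have "a1 \<noteq> a2"
  proof
    assume "a1 = a2"
    then show False using seq_map_le_comparable[OF seq_u a(2)] a(4) u(5,6) by simp
  qed
  define m where "m = meet a1 a2"
  have "m \<in> T" unfolding m_def using meet_in_tree[OF tree] a AT \<open>a1 \<noteq> a2\<close> by blast
  then have "seq (meet a1 a2)" using seqs m_def by blast
  then have "m \<subseteq>\<^sub>m u1"
    unfolding m_def by (rule meet_map_le_of_incomparable[OF _ seq_u a(2) a(4) u(5,6)])
  then have "m \<in> heavy T A" using heavy_downward \<open>m \<in> T\<close> u(1) by blast
  have "t1 \<subseteq>\<^sub>m m"
    using map_le_meet[OF heavy_seq[OF t1(1)] map_le_trans[OF u(3) a(2)] map_le_trans[OF u(4) a(4)]]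
    unfolding m_def .
  then have "s \<subseteq>\<^sub>m m" using t1(2) map_le_trans by blast
  moreover have "s \<noteq> m"
  proof
    assume "s = m"
    then have "t1 = s" using \<open>t1 \<subseteq>\<^sub>m m\<close> t1(2) map_le_antisym by blast
    then show False using t1(3,4) by blast
  qed
  ultimately have "tless s m" unfolding tless_def by simp
  then show ?thesis using \<open>m \<in> heavy T A\<close> a \<open>a1 \<noteq> a2\<close> m_def by blast
qed

theorem lemma1:
  fixes T A :: "('a::wellorder \<Rightarrow> nat option) set"
  assumes "omega1_like TYPE('a)"
    and "aronszajn T"
    and "A \<subseteq> T" and "uncountable A" and "is_antichain A"
  shows "\<exists>C\<subseteq>T. infinite C \<and> is_chain C \<and>
           (\<forall>c\<in>C. \<exists>a\<in>A. \<exists>b\<in>A. a \<noteq> b \<and> c = meet a b)"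
proof -
  define S where "S = {m\<in>heavy T A. \<exists>a\<in>A. \<exists>b\<in>A. a \<noteq> b \<and> m = meet a b}"
  have "is_tree T" "T \<noteq> {}" using assms(2) unfolding aronszajn_def by auto
  then have "Map.empty \<in> heavy T A"
    using empty_in_tree assms(4) unfolding heavy_def by auto
  then have "S \<noteq> {}"
    using heavy_meet_above[OF assms(1-3)] unfolding S_def by blast
  moreover have "\<forall>s\<in>S. \<exists>t\<in>S. tless s t"
    using heavy_meet_above[OF assms(1-3)] unfolding S_def by blast
  ultimately obtain C where "C \<subseteq> S" "infinite C" "is_chain C"
    using infinite_chain_of_no_maximal by blast
  then show ?thesis unfolding S_def heavy_def by blast
qed

end
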